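(* Let $\langle B,\wedge,{}'\rangle$ be an algebra with $\wedge$ binary and ${}'$ unary satisfying $x\wedge(y\wedge z)\approx (y\wedge x)\wedge z$ and $x\approx (x'\wedge y)'\wedge(x'\wedge y')'$. Then $x\wedge[y\wedge(z\wedge u)]=y\wedge[x\wedge(z\wedge u)]$ for all $x,y,z,u\in B$. *)

theory Defs
  imports Main
begin

end

theory Submission
  imports Defs
begin

(*
  By Huntington's equation every element is a product of two complements, x = (x'y)'(x'y')';
  applied to x'y it gives x'y = t x' for some t. With the twisted associativity x(yz) = (yx)z,
  a complement x' therefore commutes with every x'y, the squares x'x' are central, and (x'y)'
  skew-commutes with x: (x'y)'(zx) = x(z(x'y)'). Huntington's equation also writes any z as
  p(z'w)'; for w = x'x we have z'w = x'v for some v, and skew-commutation gives zx = xz.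
*)

locale twisted_semigroup =
  fixes m :: "'a \<Rightarrow> 'a \<Rightarrow> 'a" (infixr "\<cdot>" 70)
  assumes twisted_assoc: "x \<cdot> y \<cdot> z = (y \<cdot> x) \<cdot> z"
begin

lemma inner_left_commute: "x \<cdot> y \<cdot> z \<cdot> u = x \<cdot> z \<cdot> y \<cdot> u"
proof -
  have "x \<cdot> y \<cdot> z \<cdot> u = (y \<cdot> x) \<cdot> z \<cdot> u" by (rule twisted_assoc)
  also have "\<dots> = (z \<cdot> y \<cdot> x) \<cdot> u" by (rule twisted_assoc)
  also have "\<dots> = ((y \<cdot> z) \<cdot> x) \<cdot> u" by (simp only: twisted_assoc[of z y x])
  also have "\<dots> = x \<cdot> (y \<cdot> z) \<cdot> u" by (rule twisted_assoc[symmetric])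
  also have "\<dots> = x \<cdot> z \<cdot> y \<cdot> u" by (simp only: twisted_assoc[of z y u])
  finally show ?thesis .
qed

end

locale huntington_algebra = twisted_semigroup +
  fixes c :: "'a \<Rightarrow> 'a"
  assumes huntington: "c (c x \<cdot> y) \<cdot> c (c x \<cdot> c y) = x"
begin

lemma compl_mult_right_factor: "\<exists>t. c x \<cdot> y = t \<cdot> c x"
proof -
  have "c (c (c x \<cdot> y) \<cdot> c x \<cdot> c y) \<cdot> c x = c x \<cdot> y"
    using huntington[of "c x \<cdot> y" "c x \<cdot> c y"] by (simp only: huntington)
  then show ?thesis by metis
qed

lemma mult_compl_left_factor: "\<exists>v. y \<cdot> c x \<cdot> z = c x \<cdot> v"
proof -
  obtain t where t: "c x \<cdot> y = t \<cdot> c x"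
    using compl_mult_right_factor by blast
  have "y \<cdot> c x \<cdot> z = (c x \<cdot> y) \<cdot> z" by (rule twisted_assoc)
  also have "\<dots> = (t \<cdot> c x) \<cdot> z" by (simp only: t)
  also have "\<dots> = c x \<cdot> t \<cdot> z" by (rule twisted_assoc[symmetric])
  finally show ?thesis by blast
qed

lemma compl_commute_compl_mult: "c x \<cdot> c x \<cdot> y = (c x \<cdot> y) \<cdot> c x"
proof -
  obtain t where "c x \<cdot> y = t \<cdot> c x"
    using compl_mult_right_factor by blast
  then show ?thesis by (simp only: twisted_assoc[of "c x" t "c x"])
qed

lemma compl_square_central: "(c x \<cdot> c x) \<cdot> y = y \<cdot> c x \<cdot> c x"
proof -
  have "(c x \<cdot> c x) \<cdot> y = c x \<cdot> c x \<cdot> y" by (rule twisted_assoc[symmetric])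
  also have "\<dots> = (c x \<cdot> y) \<cdot> c x" by (rule compl_commute_compl_mult)
  also have "\<dots> = y \<cdot> c x \<cdot> c x" by (rule twisted_assoc[symmetric])
  finally show ?thesis .
qed

lemma compl_skew_commute: "c x \<cdot> u \<cdot> c x \<cdot> v = (c x \<cdot> v) \<cdot> u \<cdot> c x"
proof -
  have "c x \<cdot> u \<cdot> c x \<cdot> v = c x \<cdot> c x \<cdot> u \<cdot> v" by (rule inner_left_commute)
  also have "\<dots> = (c x \<cdot> c x) \<cdot> u \<cdot> v" by (rule twisted_assoc)
  also have "\<dots> = (u \<cdot> v) \<cdot> c x \<cdot> c x" by (rule compl_square_central)
  also have "\<dots> = v \<cdot> u \<cdot> c x \<cdot> c x" by (rule twisted_assoc[symmetric])
  also have "\<dots> = v \<cdot> c x \<cdot> u \<cdot> c x" by (rule inner_left_commute)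
  also have "\<dots> = (c x \<cdot> v) \<cdot> u \<cdot> c x" by (rule twisted_assoc)
  finally show ?thesis .
qed

lemma huntington_factor_skew: "c (c x \<cdot> y) \<cdot> z \<cdot> x = x \<cdot> z \<cdot> c (c x \<cdot> y)"
  using compl_skew_commute[of "c x \<cdot> y" z "c (c x \<cdot> c y)"] by (simp only: huntington)

lemma ex_huntington_right_factor: "\<exists>p. x = p \<cdot> c (c x \<cdot> y)"
proof -
  define p q where "p = c (c x \<cdot> y)" and "q = c (c x \<cdot> c y)"
  have "p \<cdot> q = x" unfolding p_def q_def by (rule huntington)
  then have "c x \<cdot> c (p \<cdot> c q) = c x \<cdot> y"
    using huntington[of "c x \<cdot> y" q] by (simp only: p_def)
  then have "c (c x \<cdot> p \<cdot> c q) \<cdot> c (c x \<cdot> y) = x"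
    using huntington[of x "p \<cdot> c q"] by (simp only:)
  then show ?thesis by metis
qed

lemma commute: "x \<cdot> y = y \<cdot> x"
proof -
  obtain v where v: "c y \<cdot> c x \<cdot> x = c x \<cdot> v"
    using mult_compl_left_factor by blast
  obtain p where "y = p \<cdot> c (c y \<cdot> c x \<cdot> x)"
    using ex_huntington_right_factor by blast
  then have y: "y = p \<cdot> c (c x \<cdot> v)"
    unfolding v .
  have "x \<cdot> y = x \<cdot> p \<cdot> c (c x \<cdot> v)" by (simp only: y)
  also have "\<dots> = c (c x \<cdot> v) \<cdot> p \<cdot> x" by (rule huntington_factor_skew[symmetric])
  also have "\<dots> = (p \<cdot> c (c x \<cdot> v)) \<cdot> x" by (rule twisted_assoc)
  also have "\<dots> = y \<cdot> x" by (simp only: y)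
  finally show ?thesis .
qed

sublocale abel_semigroup "(\<cdot>)"
proof
  show "x \<cdot> y = y \<cdot> x" for x y by (rule commute)
  show "(x \<cdot> y) \<cdot> z = x \<cdot> y \<cdot> z" for x y z
    by (simp only: twisted_assoc[of x y z] commute[of x y])
qed

end

theorem lemma6p13:
  fixes m :: "'a \<Rightarrow> 'a \<Rightarrow> 'a" and c :: "'a \<Rightarrow> 'a"
  assumes A: "\<And>x y z. m x (m y z) = m (m y x) z"
    and R: "\<And>x y. x = m (c (m (c x) y)) (c (m (c x) (c y)))"
  shows "\<forall>x y z u. m x (m y (m z u)) = m y (m x (m z u))"
proof -
  interpret huntington_algebra m c
    by unfold_locales (simp_all only: A R[symmetric])
  show ?thesis by (intro allI) (rule left_commute)
qed

end
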